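(* Let $P=(p_1,\dots,p_S)$ be a fixed probability distribution on $\{1,\dots,S\}$, let $\hat P_n=(N_1/n,\dots,N_S/n)$ be the empirical distribution of $n$ i.i.d. samples from $P$, where $N_k$ is the number of samples equal to $k$. Then, as $n\to\infty$, $$\mathbb E\big[(Q(P)-Q(\hat P_n))^2\big]=\mathcal O\Big(\frac{\log^4 n}{n}\Big).$$
   Context: For a probability vector $P=(p_1,\dots,p_S)$, $Q(P)=\sum_{k=1}^S p_k\log^2(p_k)$, with the convention $0\log^2 0=0$. *)

theory Defs
  imports Complex_Main "HOL-Library.FuncSet" "HOL-Library.Landau_Symbols"
begin

text \<open>Q(P) = sum_{k=1}^S p_k log^2 p_k (natural log; 0 log^2 0 = 0 since 0 * _ = 0).\<close>
definition Qfun :: "nat \<Rightarrow> (nat \<Rightarrow> real) \<Rightarrow> real" where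
  "Qfun S p = (\<Sum>k\<in>{1..S}. p k * (ln (p k))\<^sup>2)"

definition count_k :: "nat \<Rightarrow> (nat \<Rightarrow> nat) \<Rightarrow> nat \<Rightarrow> nat" where
  "count_k n x k = card {i\<in>{..<n}. x i = k}"

definition emp_dist :: "nat \<Rightarrow> (nat \<Rightarrow> nat) \<Rightarrow> nat \<Rightarrow> real" where
  "emp_dist n x k = real (count_k n x k) / real n"

text \<open>E[(Q(P) - Q(hat P_n))^2] for n i.i.d. samples from P: expectation over all
  sample sequences x : {0..<n} -> {1..S}, each with probability prod_i p(x_i).\<close>
definition mse_Q :: "nat \<Rightarrow> (nat \<Rightarrow> real) \<Rightarrow> nat \<Rightarrow> real" where
  "mse_Q S p n = (\<Sum>x\<in>{..<n} \<rightarrow>\<^sub>E {1..S}.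
      (\<Prod>i<n. p (x i)) * (Qfun S p - Qfun S (emp_dist n x))\<^sup>2)"

end

theory Submission
  imports Defs "HOL-Analysis.Derivative"
begin

text \<open>Write \<open>f t = t ln\<^sup>2 t\<close>. On \<open>[1/n, 1]\<close> the derivative \<open>ln\<^sup>2 t + 2 ln t\<close> of \<open>f\<close> is
  bounded by \<open>3 ln\<^sup>2 n\<close>, and \<open>|f t - f 0| = t ln\<^sup>2 t \<le> t ln\<^sup>2 n\<close> there, so \<open>f\<close> is
  \<open>3 ln\<^sup>2 n\<close>-Lipschitz on \<open>{0} \<union> [1/n, 1]\<close>. Every empirical frequency \<open>N\<^sub>k/n\<close> lies in this
  set, and so does every \<open>p\<^sub>k\<close> once \<open>n\<close> is large. Hence
  \<open>(f p\<^sub>k - f (N\<^sub>k/n))\<^sup>2 \<le> 9 ln\<^sup>4 n (N\<^sub>k/n - p\<^sub>k)\<^sup>2\<close>, whose expectation is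
  \<open>9 ln\<^sup>4 n p\<^sub>k (1 - p\<^sub>k) / n\<close>; Cauchy-Schwarz over the \<open>S\<close> symbols bounds the mean squared
  error by \<open>9 S ln\<^sup>4 n / n\<close>.\<close>

definition x_ln_sq :: "real \<Rightarrow> real" where
  "x_ln_sq t = t * (ln t)\<^sup>2"

lemma abs_ln_le_ln:
  fixes m t :: real
  assumes "0 < m" "1 / m \<le> t" "t \<le> 1"
  shows "\<bar>ln t\<bar> \<le> ln m"
proof -
  have "0 < 1 / m" using assms(1) by simp
  then have "0 < t" using assms by linarith
  then have "ln (1 / m) \<le> ln t" "ln t \<le> 0" using assms by simp_all
  then show ?thesis using assms by (simp add: ln_div)
qed

lemma abs_x_ln_sq_le:
  fixes m :: real
  assumes "0 < m" "1 / m \<le> t" "t \<le> 1"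
  shows "\<bar>x_ln_sq t\<bar> \<le> (ln m)\<^sup>2 * t"
proof -
  have "0 < 1 / m" using assms(1) by simp
  then have "0 \<le> t" using assms by linarith
  moreover have "(ln t)\<^sup>2 \<le> (ln m)\<^sup>2"
    using abs_ln_le_ln[OF assms] by (metis abs_ge_zero power2_abs power_mono)
  ultimately show ?thesis by (simp add: x_ln_sq_def abs_mult mult_left_mono mult.commute)
qed

lemma one_le_ln: "3 \<le> x \<Longrightarrow> 1 \<le> ln (x :: real)"
  using exp_le ln_ge_iff[of x 1] by linarith

lemma x_ln_sq_lipschitz_Icc:
  fixes m :: real
  assumes m: "3 \<le> m" and a: "a \<in> {1 / m..1}" and b: "b \<in> {1 / m..1}"
  shows "\<bar>x_ln_sq b - x_ln_sq a\<bar> \<le> 3 * (ln m)\<^sup>2 * \<bar>b - a\<bar>"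
proof -
  have ln_m: "1 \<le> ln m" using one_le_ln m .
  have "(x_ln_sq has_field_derivative (ln z)\<^sup>2 + 2 * ln z) (at z within {1 / m..1})"
    if "z \<in> {1 / m..1}" for z
  proof -
    have "0 < z" using that m by (smt (verit) atLeastAtMost_iff zero_less_divide_1_iff)
    then show ?thesis unfolding x_ln_sq_def
      by (auto intro!: derivative_eq_intros simp: power2_eq_square field_simps)
  qed
  moreover have "norm ((ln z)\<^sup>2 + 2 * ln z) \<le> 3 * (ln m)\<^sup>2" if "z \<in> {1 / m..1}" for z
  proof -
    have abs_ln: "\<bar>ln z\<bar> \<le> ln m" using abs_ln_le_ln[of m z] that m by simp
    then have "(ln z)\<^sup>2 \<le> (ln m)\<^sup>2" by (metis abs_ge_zero power2_abs power_mono)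
    moreover have "ln m \<le> (ln m)\<^sup>2"
      using mult_left_mono[OF ln_m, of "ln m"] ln_m by (simp add: power2_eq_square)
    ultimately show ?thesis using abs_ln by (simp add: abs_le_iff) (smt (verit) zero_le_power2)
  qed
  ultimately show ?thesis
    using field_differentiable_bound[of "{1 / m..1}" x_ln_sq "\<lambda>z. (ln z)\<^sup>2 + 2 * ln z" _ b a] a b
    by simp
qed

lemma x_ln_sq_lipschitz:
  fixes m :: real
  assumes m: "3 \<le> m" and a: "a \<in> insert 0 {1 / m..1}" and b: "b \<in> insert 0 {1 / m..1}"
  shows "\<bar>x_ln_sq b - x_ln_sq a\<bar> \<le> 3 * (ln m)\<^sup>2 * \<bar>b - a\<bar>"
proof -
  have from_0: "\<bar>x_ln_sq t\<bar> \<le> 3 * (ln m)\<^sup>2 * \<bar>t\<bar>" if t: "t \<in> {1 / m..1}" for t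
  proof -
    have "0 \<le> t" using t m by (simp add: order.trans[of 0 "1 / m"])
    have "\<bar>x_ln_sq t\<bar> \<le> (ln m)\<^sup>2 * t" using abs_x_ln_sq_le[of m t] t m by simp
    also have "\<dots> \<le> 3 * (ln m)\<^sup>2 * \<bar>t\<bar>" using \<open>0 \<le> t\<close> by (simp add: mult_right_mono)
    finally show ?thesis .
  qed
  show ?thesis
    using a b from_0[of a] from_0[of b] x_ln_sq_lipschitz_Icc[OF m, of a b]
    by (auto simp: x_ln_sq_def abs_minus_commute)
qed

definition frequency :: "nat \<Rightarrow> (nat \<Rightarrow> 'a) \<Rightarrow> 'a \<Rightarrow> real" where
  "frequency n x k = real (card {j\<in>{..<n}. x j = k}) / real n"

lemma frequency_eq_sum: "frequency n x k = (\<Sum>j<n. of_bool (x j = k)) / real n"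
  by (simp add: frequency_def sum.If_cases Int_def)

lemma frequency_mem: "frequency n x k \<in> insert 0 {1 / real n..1}"
proof -
  have card_le: "card {j\<in>{..<n}. x j = k} \<le> n"
    using card_mono[of "{..<n}" "{j\<in>{..<n}. x j = k}"] by auto
  show ?thesis
  proof (cases "card {j\<in>{..<n}. x j = k} = 0")
    case False
    then have "1 \<le> card {j\<in>{..<n}. x j = k}" by linarith
    then show ?thesis using card_le by (simp add: frequency_def divide_right_mono divide_le_eq)
  qed (simp add: frequency_def)
qed

lemma emp_dist_eq_frequency: "emp_dist n x = frequency n x"
  by (simp add: fun_eq_iff emp_dist_def count_k_def frequency_def)

locale iid_sample =
  fixes A :: "'a set" and p :: "'a \<Rightarrow> real"
  assumes finite_A: "finite A"
    and nonneg: "a \<in> A \<Longrightarrow> 0 \<le> p a"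
    and sum_eq_1: "(\<Sum>a\<in>A. p a) = 1"
begin

definition expectation :: "nat \<Rightarrow> ((nat \<Rightarrow> 'a) \<Rightarrow> real) \<Rightarrow> real" where
  "expectation n f = (\<Sum>x\<in>{..<n} \<rightarrow>\<^sub>E A. (\<Prod>i<n. p (x i)) * f x)"

lemma weight_nonneg: "x \<in> {..<n} \<rightarrow>\<^sub>E A \<Longrightarrow> 0 \<le> (\<Prod>i<n. p (x i))"
  by (intro prod_nonneg) (auto intro: nonneg)

lemma expectation_cmult: "expectation n (\<lambda>x. c * f x) = c * expectation n f"
  by (simp add: expectation_def sum_distrib_left mult_ac)

lemma expectation_sum: "expectation n (\<lambda>x. \<Sum>j\<in>J. f j x) = (\<Sum>j\<in>J. expectation n (f j))"
  by (simp add: expectation_def sum_distrib_left sum.swap[of _ J])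

lemma expectation_mono:
  "(\<And>x. x \<in> {..<n} \<rightarrow>\<^sub>E A \<Longrightarrow> f x \<le> g x) \<Longrightarrow> expectation n f \<le> expectation n g"
  unfolding expectation_def by (intro sum_mono mult_left_mono) (auto intro: weight_nonneg)

lemma expectation_nonneg:
  "(\<And>x. x \<in> {..<n} \<rightarrow>\<^sub>E A \<Longrightarrow> 0 \<le> f x) \<Longrightarrow> 0 \<le> expectation n f"
  unfolding expectation_def by (intro sum_nonneg mult_nonneg_nonneg) (auto intro: weight_nonneg)

lemma expectation_prod:
  "expectation n (\<lambda>x. \<Prod>i<n. g i (x i)) = (\<Prod>i<n. \<Sum>a\<in>A. p a * g i a)"
  unfolding expectation_def
  by (simp add: prod_sum_PiE finite_A prod.distrib[symmetric])

lemma expectation_coordinate: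
  assumes "j < n"
  shows "expectation n (\<lambda>x. h (x j)) = (\<Sum>a\<in>A. p a * h a)"
proof -
  have "expectation n (\<lambda>x. h (x j)) = (\<Prod>i<n. \<Sum>a\<in>A. p a * (if i = j then h a else 1))"
    using expectation_prod[of n "\<lambda>i a. if i = j then h a else 1"] assms by simp
  also have "\<dots> = (\<Prod>i<n. if i = j then \<Sum>a\<in>A. p a * h a else 1)"
    by (rule prod.cong) (auto simp: sum_eq_1)
  finally show ?thesis using assms by simp
qed

lemma expectation_coordinate_pair:
  assumes "j < n" "l < n" "j \<noteq> l"
  shows "expectation n (\<lambda>x. g (x j) * h (x l)) = (\<Sum>a\<in>A. p a * g a) * (\<Sum>a\<in>A. p a * h a)"
proof -
  define G where "G i a = (if i = j then g a else 1) * (if i = l then h a else 1)" for i a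
  have "expectation n (\<lambda>x. g (x j) * h (x l)) = expectation n (\<lambda>x. \<Prod>i<n. G i (x i))"
    using assms by (simp add: G_def prod.distrib)
  also have "\<dots> = (\<Prod>i<n. (if i = j then \<Sum>a\<in>A. p a * g a else 1) * (if i = l then \<Sum>a\<in>A. p a * h a else 1))"
    unfolding expectation_prod using assms by (intro prod.cong) (auto simp: G_def sum_eq_1)
  finally show ?thesis using assms by (simp add: prod.distrib)
qed

lemma expectation_sum_centred_sq:
  assumes centred: "(\<Sum>a\<in>A. p a * c a) = 0"
  shows "expectation n (\<lambda>x. (\<Sum>j<n. c (x j))\<^sup>2) = real n * (\<Sum>a\<in>A. p a * (c a)\<^sup>2)"
proof -
  have "expectation n (\<lambda>x. (\<Sum>j<n. c (x j))\<^sup>2)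
      = (\<Sum>j<n. \<Sum>l<n. expectation n (\<lambda>x. c (x j) * c (x l)))"
    by (simp add: power2_eq_square sum_product expectation_sum)
  also have "\<dots> = (\<Sum>j<n. \<Sum>l<n. if l = j then \<Sum>a\<in>A. p a * (c a)\<^sup>2 else 0)"
    using expectation_coordinate[where h = "\<lambda>a. (c a)\<^sup>2"]
    by (intro sum.cong refl) (auto simp: expectation_coordinate_pair centred power2_eq_square)
  finally show ?thesis by simp
qed

lemma expectation_frequency_sq_dev:
  assumes "k \<in> A" "0 < n"
  shows "expectation n (\<lambda>x. (frequency n x k - p k)\<^sup>2) = p k * (1 - p k) / real n"
proof -
  define c where "c a = of_bool (a = k) - p k" for a
  have pick: "(\<Sum>a\<in>A. p a * of_bool (a = k)) = p k"
    using assms finite_A by (simp add: if_distrib cong: if_cong)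
  have centred: "(\<Sum>a\<in>A. p a * c a) = 0"
    using pick by (simp add: c_def right_diff_distrib sum_subtractf sum_distrib_right[symmetric] sum_eq_1)
  have "(\<Sum>a\<in>A. p a * (c a)\<^sup>2)
      = (\<Sum>a\<in>A. (1 - 2 * p k) * (p a * of_bool (a = k)) + (p k)\<^sup>2 * p a)"
    by (intro sum.cong) (auto simp: c_def power2_eq_square algebra_simps)
  also have "\<dots> = (1 - 2 * p k) * (\<Sum>a\<in>A. p a * of_bool (a = k)) + (p k)\<^sup>2 * (\<Sum>a\<in>A. p a)"
    by (simp add: sum.distrib sum_distrib_left)
  also have "\<dots> = p k * (1 - p k)"
    by (simp add: pick sum_eq_1 power2_eq_square algebra_simps)
  finally have variance: "(\<Sum>a\<in>A. p a * (c a)\<^sup>2) = p k * (1 - p k)" .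
  have "frequency n x k - p k = (\<Sum>j<n. c (x j)) / real n" for x
    using assms by (simp add: frequency_eq_sum c_def sum_subtractf field_simps)
  then have "expectation n (\<lambda>x. (frequency n x k - p k)\<^sup>2)
      = expectation n (\<lambda>x. (\<Sum>j<n. c (x j))\<^sup>2) / (real n)\<^sup>2"
    using expectation_cmult[of n "1 / (real n)\<^sup>2"] by (simp add: power_divide)
  also have "\<dots> = p k * (1 - p k) / real n"
    unfolding expectation_sum_centred_sq[OF centred] variance
    using assms by (simp add: power2_eq_square)
  finally show ?thesis .
qed

lemma prob_le_1: "a \<in> A \<Longrightarrow> p a \<le> 1"
  using member_le_sum[of a A p] nonneg finite_A sum_eq_1 by auto

lemma expectation_x_ln_sq_dev_sq_le:
  assumes k: "k \<in> A" and n: "3 \<le> real n" and pk: "p k = 0 \<or> 1 / real n \<le> p k"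
  shows "expectation n (\<lambda>x. (x_ln_sq (p k) - x_ln_sq (frequency n x k))\<^sup>2)
    \<le> 9 * ln (real n) ^ 4 * p k / real n"
proof -
  define L where "L = 9 * ln (real n) ^ 4"
  have "expectation n (\<lambda>x. (x_ln_sq (p k) - x_ln_sq (frequency n x k))\<^sup>2)
      \<le> expectation n (\<lambda>x. L * (frequency n x k - p k)\<^sup>2)"
  proof (rule expectation_mono)
    fix x :: "nat \<Rightarrow> 'a"
    have "p k \<in> insert 0 {1 / real n..1}" using pk prob_le_1[OF k] by auto
    then have "\<bar>x_ln_sq (frequency n x k) - x_ln_sq (p k)\<bar> \<le> 3 * (ln n)\<^sup>2 * \<bar>frequency n x k - p k\<bar>"
      using x_ln_sq_lipschitz[OF n _ frequency_mem] by simp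
    then have "(x_ln_sq (frequency n x k) - x_ln_sq (p k))\<^sup>2
        \<le> (3 * (ln n)\<^sup>2 * \<bar>frequency n x k - p k\<bar>)\<^sup>2"
      by (metis abs_ge_zero order_trans power2_abs power_mono)
    then show "(x_ln_sq (p k) - x_ln_sq (frequency n x k))\<^sup>2 \<le> L * (frequency n x k - p k)\<^sup>2"
      by (simp add: L_def power2_commute power_mult_distrib power2_abs flip: power_mult)
  qed
  also have "\<dots> = L * (p k * (1 - p k) / real n)"
    using n by (simp add: expectation_cmult expectation_frequency_sq_dev k)
  also have "\<dots> \<le> L * p k / real n"
  proof -
    have "p k * (1 - p k) \<le> p k" using nonneg[OF k] by (simp add: algebra_simps)
    then have "L * (p k * (1 - p k)) \<le> L * p k" by (rule mult_left_mono) (simp add: L_def)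
    then show ?thesis by (simp add: divide_right_mono)
  qed
  finally show ?thesis by (simp add: L_def)
qed

lemma expectation_sum_x_ln_sq_dev_sq_le:
  assumes n: "3 \<le> real n" and small: "\<forall>k\<in>A. p k = 0 \<or> 1 / real n \<le> p k"
  shows "expectation n (\<lambda>x. (\<Sum>k\<in>A. x_ln_sq (p k) - x_ln_sq (frequency n x k))\<^sup>2)
    \<le> 9 * real (card A) * (ln (real n) ^ 4 / real n)"
proof -
  have "expectation n (\<lambda>x. (\<Sum>k\<in>A. x_ln_sq (p k) - x_ln_sq (frequency n x k))\<^sup>2)
      \<le> expectation n (\<lambda>x. card A * (\<Sum>k\<in>A. (x_ln_sq (p k) - x_ln_sq (frequency n x k))\<^sup>2))"
    by (intro expectation_mono) (metis sum_squared_le_sum_of_squares mult.commute)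
  also have "\<dots> = card A * (\<Sum>k\<in>A. expectation n (\<lambda>x. (x_ln_sq (p k) - x_ln_sq (frequency n x k))\<^sup>2))"
    by (simp add: expectation_cmult expectation_sum)
  also have "\<dots> \<le> card A * (\<Sum>k\<in>A. 9 * ln (real n) ^ 4 * p k / real n)"
    using expectation_x_ln_sq_dev_sq_le n small by (auto intro!: mult_left_mono sum_mono)
  also have "\<dots> = 9 * card A * (ln (real n) ^ 4 / real n)"
    by (simp add: sum_divide_distrib[symmetric] sum_distrib_left[symmetric] sum_eq_1)
  finally show ?thesis by simp
qed

lemma eventually_positive_probs_ge_inverse:
  "eventually (\<lambda>n. \<forall>k\<in>A. p k = 0 \<or> 1 / real n \<le> p k) at_top"
proof -
  have "eventually (\<lambda>n. p k = 0 \<or> 1 / real n \<le> p k) at_top" if "k \<in> A" for k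
  proof (cases "p k = 0")
    case False
    then have "0 < p k" using nonneg[OF that] by simp
    then have "eventually (\<lambda>n. 1 / real n < p k) at_top"
      using order_tendstoD(2)[OF lim_1_over_n] by blast
    then show ?thesis by eventually_elim simp
  qed simp
  then show ?thesis by (intro eventually_ball_finite finite_A) auto
qed

end

theorem mainTheorem5:
  fixes S :: nat and p :: "nat \<Rightarrow> real"
  assumes "S \<ge> 1"
    and "\<And>k. k \<in> {1..S} \<Longrightarrow> p k \<ge> 0"
    and "(\<Sum>k\<in>{1..S}. p k) = 1"
  shows "(\<lambda>n. mse_Q S p n) \<in> O(\<lambda>n. (ln (real n)) ^ 4 / real n)"
proof -
  interpret iid_sample "{1..S}" p using assms(2,3) by unfold_locales auto
  have mse_Q_eq: "mse_Q S p n
      = expectation n (\<lambda>x. (\<Sum>k\<in>{1..S}. x_ln_sq (p k) - x_ln_sq (frequency n x k))\<^sup>2)" for n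
    unfolding expectation_def
    by (simp add: mse_Q_def Qfun_def emp_dist_eq_frequency x_ln_sq_def sum_subtractf)
  note eventually_positive_probs_ge_inverse
  moreover have "eventually (\<lambda>n. 3 \<le> real n) at_top"
    using eventually_ge_at_top[of "3::nat"] by eventually_elim simp
  ultimately have "eventually (\<lambda>n. norm (mse_Q S p n) \<le> 9 * S * norm (ln (real n) ^ 4 / real n)) at_top"
  proof eventually_elim
    case (elim n)
    have "0 \<le> mse_Q S p n"
      unfolding mse_Q_eq by (intro expectation_nonneg) simp
    then show ?case
      using expectation_sum_x_ln_sq_dev_sq_le[OF elim(2,1)] elim(2)
      by (simp add: mse_Q_eq)
  qed
  then show ?thesis by (rule bigoI)
qed

end
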